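(* Let $V_A, V_B \subseteq \mathbb{R}^d$ be $k$-dimensional subspaces, let $w\in\mathbb{R}^d$ with $\|w\|=1$, and set $K_A^* = \|\Pi_{V_A} w\|$, $K_B^* = \|\Pi_{V_B} w\|$, $K_{AB}^* = \|\Pi_{V_A+V_B} w\|$, and $\Delta = K_{AB}^* - \max(K_A^*,K_B^* )$. Assume $K_A^* \ge K_B^*$. Let $\eta = \eta(V_A,V_B,w)$ be the private information value of $V_B$ relative to $V_A$. Then $$\Delta = \sqrt{(K_A^* )^2 + \eta^2} - K_A^*,$$ and $$\frac{\eta^2}{2K_A^* + \eta} \le \Delta \le \eta.$$ Both bounds are tight: the upper bound holds with equality when $K_A^* = 0$, and the lower bound is asymptotically tight as $\eta \to 0$ (with $K_A^*>0$ fixed), in the sense that $\Delta$ and $\eta^2/(2K_A^*+\eta)$ both equal $\eta^2/(2K_A^* )$ up to $o(\eta^2)$.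
   Context: $\Pi_V$ denotes orthogonal projection onto a subspace $V$; $V_A+V_B=\{u+v: u\in V_A, v\in V_B\}$. Principal angles $\theta_1,\dots,\theta_k\in[0,\pi/2]$ between $V_A$ and $V_B$ are defined recursively by $\cos\theta_i = \max\{\langle u,v\rangle : u\in V_A,\|u\|=1,u\perp u_1,\dots,u_{i-1};\ v\in V_B,\|v\|=1,v\perp v_1,\dots,v_{i-1}\}$, with maximizers $(u_i,v_i)$ (principal vectors) satisfying $\langle u_i,v_j\rangle=\cos\theta_i\,\delta_{ij}$. For $\theta_i>0$ set $\tilde v_i=(v_i-\cos\theta_i\,u_i)/\sin\theta_i$. The private information value is $\eta(V_A,V_B,w)=\sqrt{\sum_{i:\theta_i>0}\langle w,\tilde v_i\rangle^2}$. (Interpretation: $K(y)=\langle w,h(y)\rangle$ is a linear scoring function on representations, $K_A^*, K_B^*$ are the single-model optimal scores, $K_{AB}^*$ the debate-optimal score, and $\Delta$ the debate advantage.) *)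

theory Defs
  imports "HOL-Analysis.Analysis" "HOL-Library.Landau_Symbols"
begin

definition orth_proj :: "'a::euclidean_space set \<Rightarrow> 'a \<Rightarrow> 'a" where
  "orth_proj V w = (THE p. p \<in> V \<and> (\<forall>x\<in>V. inner (w - p) x = 0))"

definition subspace_sum :: "'a::euclidean_space set \<Rightarrow> 'a set \<Rightarrow> 'a set" where
  "subspace_sum VA VB = {u + v | u v. u \<in> VA \<and> v \<in> VB}"

definition principal_vectors ::
  "'a::euclidean_space set \<Rightarrow> 'a set \<Rightarrow> nat \<Rightarrow> (nat \<Rightarrow> 'a) \<Rightarrow> (nat \<Rightarrow> 'a) \<Rightarrow> bool" where
  "principal_vectors VA VB k u v \<longleftrightarrow>
     (\<forall>i<k. u i \<in> VA \<and> norm (u i) = 1 \<and> (\<forall>j<i. inner (u i) (u j) = 0) \<and>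
            v i \<in> VB \<and> norm (v i) = 1 \<and> (\<forall>j<i. inner (v i) (v j) = 0) \<and>
            (\<forall>x y. x \<in> VA \<and> norm x = 1 \<and> (\<forall>j<i. inner x (u j) = 0) \<and>
                   y \<in> VB \<and> norm y = 1 \<and> (\<forall>j<i. inner y (v j) = 0)
                   \<longrightarrow> inner x y \<le> inner (u i) (v i)))"

definition vtilde :: "(nat \<Rightarrow> 'a::euclidean_space) \<Rightarrow> (nat \<Rightarrow> 'a) \<Rightarrow> nat \<Rightarrow> 'a" where
  "vtilde u v i = (let \<theta> = arccos (inner (u i) (v i)) in
                   (1 / sin \<theta>) *\<^sub>R (v i - cos \<theta> *\<^sub>R u i))"

definition private_info ::
  "nat \<Rightarrow> (nat \<Rightarrow> 'a::euclidean_space) \<Rightarrow> (nat \<Rightarrow> 'a) \<Rightarrow> 'a \<Rightarrow> real" where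
  "private_info k u v w =
     sqrt (\<Sum>i\<in>{i. i < k \<and> arccos (inner (u i) (v i)) > 0}. (inner w (vtilde u v i))\<^sup>2)"

end

theory Submission imports Defs begin

text \<open>Maximality of each principal pair forces the biorthogonality \<open>\<langle>u\<^sub>i, v\<^sub>j\<rangle> = 0\<close> for
  \<open>i \<noteq> j\<close>. Hence the normalized residuals \<open>v\<^sub>i - cos \<theta>\<^sub>i u\<^sub>i\<close>, i.e. the vectors \<open>vtilde u v i\<close> with
  \<open>\<theta>\<^sub>i > 0\<close>, are orthonormal and orthogonal to \<open>V\<^sub>A\<close>, and together with the \<open>u\<^sub>i\<close> they form an
  orthonormal basis of \<open>V\<^sub>A + V\<^sub>B\<close>. Pythagoras gives \<open>K\<^sub>A\<^sub>B\<^sup>2 = K\<^sub>A\<^sup>2 + \<eta>\<^sup>2\<close>, and the bounds follow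
  from \<open>\<Delta> = \<eta>\<^sup>2 / (sqrt (K\<^sub>A\<^sup>2 + \<eta>\<^sup>2) + K\<^sub>A)\<close>.\<close>

lemma orth_proj_eqI:
  fixes S :: "'a::euclidean_space set"
  assumes "subspace S" "p \<in> S" "\<And>x. x \<in> S \<Longrightarrow> inner (w - p) x = 0"
  shows "orth_proj S w = p"
  unfolding orth_proj_def
proof (rule the_equality)
  show "p \<in> S \<and> (\<forall>x\<in>S. inner (w - p) x = 0)" using assms by auto
  fix q assume q: "q \<in> S \<and> (\<forall>x\<in>S. inner (w - q) x = 0)"
  have "p - q \<in> S" using assms q by (simp add: subspace_diff)
  then have "inner (w - q) (p - q) - inner (w - p) (p - q) = 0" using q assms by simp
  then have "inner (p - q) (p - q) = 0" by (simp add: inner_diff_left algebra_simps)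
  then show "q = p" by simp
qed

lemma norm_orth_proj_span_orthonormal:
  fixes f :: "'i \<Rightarrow> 'a::euclidean_space"
  assumes "finite I"
    and orthonormal: "\<And>i j. i \<in> I \<Longrightarrow> j \<in> I \<Longrightarrow> inner (f i) (f j) = (if i = j then 1 else 0)"
  shows "(norm (orth_proj (span (f ` I)) w))\<^sup>2 = (\<Sum>i\<in>I. (inner w (f i))\<^sup>2)"
proof -
  define p where "p = (\<Sum>i\<in>I. inner w (f i) *\<^sub>R f i)"
  have inner_p: "inner p (f j) = inner w (f j)" if "j \<in> I" for j
  proof -
    have "inner p (f j) = (\<Sum>i\<in>I. if i = j then inner w (f i) else 0)"
      unfolding p_def inner_sum_left using orthonormal that by (intro sum.cong) auto
    also have "\<dots> = inner w (f j)" using assms(1) that by (simp add: sum.delta')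
    finally show ?thesis .
  qed
  have "orth_proj (span (f ` I)) w = p"
  proof (rule orth_proj_eqI)
    show "p \<in> span (f ` I)" unfolding p_def by (intro span_sum span_scale span_base) auto
    fix x assume "x \<in> span (f ` I)"
    then have "orthogonal (w - p) x"
      by (rule orthogonal_to_span) (auto simp: orthogonal_def inner_diff_left inner_p)
    then show "inner (w - p) x = 0" by (simp add: orthogonal_def)
  qed simp
  moreover have "(norm p)\<^sup>2 = (\<Sum>i\<in>I. inner w (f i) * inner p (f i))"
    unfolding power2_norm_eq_inner by (subst (2) p_def) (simp add: inner_sum_right)
  ultimately show ?thesis by (simp add: inner_p power2_eq_square)
qed

lemma subspace_eq_span_orthonormal:
  fixes g :: "'i \<Rightarrow> 'a::euclidean_space"
  assumes "subspace V" "dim V = card I" "\<And>i. i \<in> I \<Longrightarrow> g i \<in> V"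
    and orthonormal: "\<And>i j. i \<in> I \<Longrightarrow> j \<in> I \<Longrightarrow> inner (g i) (g j) = (if i = j then 1 else 0)"
  shows "V = span (g ` I)"
proof -
  have "inj_on g I"
    by (rule inj_onI) (metis orthonormal zero_neq_one)
  then have card: "card (g ` I) = dim V" using assms(2) by (simp add: card_image)
  have "independent (g ` I)"
  proof (rule pairwise_orthogonal_independent)
    show "pairwise orthogonal (g ` I)"
      unfolding pairwise_def orthogonal_def using orthonormal by auto
    show "0 \<notin> g ` I" using orthonormal by force
  qed
  then have "V \<subseteq> span (g ` I)"
    using card_ge_dim_independent[of "g ` I" V] assms(3) card by auto
  then show ?thesis using span_subspace[of "g ` I" V] assms(1,3) by auto
qed

lemma principal_vectorsD:
  assumes "principal_vectors VA VB k u v" "i < k"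
  shows "u i \<in> VA" "norm (u i) = 1" "v i \<in> VB" "norm (v i) = 1"
    and "\<And>x y. x \<in> VA \<Longrightarrow> norm x = 1 \<Longrightarrow> \<forall>j<i. inner x (u j) = 0 \<Longrightarrow>
           y \<in> VB \<Longrightarrow> norm y = 1 \<Longrightarrow> \<forall>j<i. inner y (v j) = 0 \<Longrightarrow>
           inner x y \<le> inner (u i) (v i)"
  using assms unfolding principal_vectors_def by blast+

lemma principal_vectors_orthonormal:
  assumes "principal_vectors VA VB k u v" "i < k" "j < k"
  shows "inner (u i) (u j) = (if i = j then 1 else 0)"
    and "inner (v i) (v j) = (if i = j then 1 else 0)"
proof -
  have "inner (g i) (g j) = (if i = j then 1 else 0)"
    if "\<forall>i<k. norm (g i) = 1 \<and> (\<forall>j<i. inner (g i) (g j) = 0)" for g :: "nat \<Rightarrow> 'a"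
    using that assms(2,3) by (cases i j rule: linorder_cases) (auto simp: norm_eq_1 inner_commute)
  then show "inner (u i) (u j) = (if i = j then 1 else 0)" "inner (v i) (v j) = (if i = j then 1 else 0)"
    using assms(1) unfolding principal_vectors_def by blast+
qed

lemma principal_vectors_inner_nonneg:
  assumes "principal_vectors VA VB k u v" "subspace VB" "i < k"
  shows "0 \<le> inner (u i) (v i)"
proof -
  have "inner (u i) (- v i) \<le> inner (u i) (v i)"
    using assms principal_vectors_orthonormal[OF assms(1,3)]
    by (intro principal_vectorsD(5)[OF assms(1,3)])
       (auto simp: principal_vectorsD subspace_neg inner_commute)
  then show ?thesis by simp
qed

text \<open>Otherwise the unit vector along \<open>inner a b *\<^sub>R b + inner a e *\<^sub>R e\<close> would beat \<open>b\<close>.\<close>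
lemma inner_eq_0_if_max_on_plane:
  fixes a b e :: "'a::real_inner"
  assumes "norm b = 1" "norm e = 1" "inner b e = 0"
    and max: "\<And>s t. norm (s *\<^sub>R b + t *\<^sub>R e) = 1 \<Longrightarrow> inner a (s *\<^sub>R b + t *\<^sub>R e) \<le> inner a b"
  shows "inner a e = 0"
proof (rule ccontr)
  define c where "c = inner a b"
  define s where "s = inner a e"
  define r where "r = sqrt (c\<^sup>2 + s\<^sup>2)"
  assume "inner a e \<noteq> 0"
  then have "s \<noteq> 0" unfolding s_def .
  then have "r > 0" unfolding r_def by (simp add: add_nonneg_pos)
  have r2: "r\<^sup>2 = c\<^sup>2 + s\<^sup>2" unfolding r_def by simp
  have norm_plane: "norm (x *\<^sub>R b + y *\<^sub>R e) = sqrt (x\<^sup>2 + y\<^sup>2)" for x y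
    using assms(1-3) unfolding norm_eq_sqrt_inner
    by (simp add: inner_add_left inner_add_right inner_commute power2_eq_square norm_eq_1)
  have "norm ((c / r) *\<^sub>R b + (s / r) *\<^sub>R e) = 1"
    using \<open>r > 0\<close> \<open>s \<noteq> 0\<close> by (simp add: norm_plane power_divide r2 add_divide_distrib[symmetric])
  then have "inner a ((c / r) *\<^sub>R b + (s / r) *\<^sub>R e) \<le> c"
    unfolding c_def by (rule max)
  then have "(c\<^sup>2 + s\<^sup>2) / r \<le> c"
    by (simp add: inner_add_right c_def s_def power2_eq_square add_divide_distrib)
  then have "r \<le> c" using \<open>r > 0\<close> unfolding r2[symmetric] by (simp add: power2_eq_square)
  then have "r\<^sup>2 \<le> c\<^sup>2" using \<open>r > 0\<close> by (simp add: power_mono)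
  then show False using \<open>s \<noteq> 0\<close> by (simp add: r2)
qed

lemma principal_vectors_biorthogonal:
  assumes pv: "principal_vectors VA VB k u v" and "subspace VA" "subspace VB"
    and "i < k" "j < k" "i \<noteq> j"
  shows "inner (u i) (v j) = 0"
proof (cases i j rule: linorder_cases)
  case less
  note on = principal_vectors_orthonormal[OF pv]
  show ?thesis
  proof (rule inner_eq_0_if_max_on_plane)
    fix s t assume "norm (s *\<^sub>R v i + t *\<^sub>R v j) = 1"
    then show "inner (u i) (s *\<^sub>R v i + t *\<^sub>R v j) \<le> inner (u i) (v i)"
      using assms less on
      by (intro principal_vectorsD(5)[OF pv \<open>i < k\<close>])
         (auto simp: principal_vectorsD subspace_add subspace_scale inner_add_left)
  qed (use assms on in \<open>auto simp: principal_vectorsD\<close>)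
next
  case greater
  note on = principal_vectors_orthonormal[OF pv]
  have "inner (v j) (u i) = 0"
  proof (rule inner_eq_0_if_max_on_plane)
    fix s t assume "norm (s *\<^sub>R u j + t *\<^sub>R u i) = 1"
    then have "inner (s *\<^sub>R u j + t *\<^sub>R u i) (v j) \<le> inner (u j) (v j)"
      using assms greater on
      by (intro principal_vectorsD(5)[OF pv \<open>j < k\<close>])
         (auto simp: principal_vectorsD subspace_add subspace_scale inner_add_left)
    then show "inner (v j) (s *\<^sub>R u j + t *\<^sub>R u i) \<le> inner (v j) (u j)"
      by (simp add: inner_commute)
  qed (use assms on in \<open>auto simp: principal_vectorsD\<close>)
  then show ?thesis by (simp add: inner_commute)
qed (use assms in simp)

definition positive_angle_indices ::
  "nat \<Rightarrow> (nat \<Rightarrow> 'a::euclidean_space) \<Rightarrow> (nat \<Rightarrow> 'a) \<Rightarrow> nat set" where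
  "positive_angle_indices k u v = {i. i < k \<and> 0 < arccos (inner (u i) (v i))}"

lemma private_info_squared:
  "(private_info k u v w)\<^sup>2 = (\<Sum>i\<in>positive_angle_indices k u v. (inner w (vtilde u v i))\<^sup>2)"
  unfolding private_info_def positive_angle_indices_def by (simp add: sum_nonneg)

lemma principal_vectors_inner_bounds:
  assumes "principal_vectors VA VB k u v" "i < k"
  shows "-1 \<le> inner (u i) (v i)" "inner (u i) (v i) \<le> 1"
  using Cauchy_Schwarz_ineq2[of "u i" "v i"] principal_vectorsD[OF assms] by auto

lemma positive_angle_indices_iff:
  assumes "principal_vectors VA VB k u v"
  shows "i \<in> positive_angle_indices k u v \<longleftrightarrow> i < k \<and> inner (u i) (v i) < 1"
  using principal_vectors_inner_bounds[OF assms, of i] arccos_lbound arccos_eq_0_iff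
  unfolding positive_angle_indices_def by (force simp: order_less_le)

lemma vtilde_eq:
  assumes "\<bar>inner (u i) (v i)\<bar> \<le> 1"
  shows "vtilde u v i =
    (1 / sqrt (1 - (inner (u i) (v i))\<^sup>2)) *\<^sub>R (v i - inner (u i) (v i) *\<^sub>R u i)"
  using assms by (simp add: vtilde_def sin_arccos cos_arccos)

lemma principal_vectors_vtilde_orthonormal:
  assumes pv: "principal_vectors VA VB k u v" and "subspace VA" "subspace VB"
    and i: "i \<in> positive_angle_indices k u v"
  shows "\<And>j. j < k \<Longrightarrow> inner (u j) (vtilde u v i) = 0"
    and "\<And>j. j \<in> positive_angle_indices k u v \<Longrightarrow>
           inner (vtilde u v i) (vtilde u v j) = (if i = j then 1 else 0)"
proof -
  define c where "c i = inner (u i) (v i)" for i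
  define t where "t i = v i - c i *\<^sub>R u i" for i
  note biorthogonal = principal_vectors_biorthogonal[OF assms(1-3)]
  note orthonormal = principal_vectors_orthonormal[OF pv]
  have u_t: "inner (u j) (t i) = 0" if "i < k" "j < k" for i j
    using biorthogonal[OF that(2,1)] orthonormal(1)[OF that(2,1)]
    by (cases "i = j") (auto simp: t_def c_def inner_diff_right)
  have t_t: "inner (t i) (t j) = (if i = j then 1 - (c i)\<^sup>2 else 0)" if "i < k" "j < k" for i j
  proof -
    have "inner (t i) (t j) = inner (t i) (v j)"
      using u_t[OF that(1,2)] by (simp add: t_def[of j] inner_diff_right inner_commute)
    also have "\<dots> = (if i = j then 1 - (c i)\<^sup>2 else 0)"
      using biorthogonal[OF that(1,2)] orthonormal(2)[OF that]
      by (auto simp: t_def c_def inner_diff_left power2_eq_square)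
    finally show ?thesis .
  qed
  have P: "j < k \<and> 0 \<le> c j \<and> c j < 1" if "j \<in> positive_angle_indices k u v" for j
    using that principal_vectors_inner_nonneg[OF pv \<open>subspace VB\<close>]
    unfolding positive_angle_indices_iff[OF pv] c_def by auto
  have vtilde: "vtilde u v j = (1 / sqrt (1 - (c j)\<^sup>2)) *\<^sub>R t j"
    if "j \<in> positive_angle_indices k u v" for j
    using P[OF that] unfolding c_def t_def by (intro vtilde_eq) simp
  have "0 < 1 - (c i)\<^sup>2" using P[OF i] by (simp add: power_less_one_iff)
  then show "inner (vtilde u v i) (vtilde u v j) = (if i = j then 1 else 0)"
    if "j \<in> positive_angle_indices k u v" for j
    using P[OF i] P[OF that] by (cases "i = j") (simp_all add: vtilde i that t_t)
  show "inner (u j) (vtilde u v i) = 0" if "j < k" for j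
    using P[OF i] that by (simp add: vtilde i u_t)
qed

lemma principal_vectors_extended_orthonormal:
  assumes "principal_vectors VA VB k u v" "subspace VA" "subspace VB"
    and "a \<in> {..<k} <+> positive_angle_indices k u v" "b \<in> {..<k} <+> positive_angle_indices k u v"
  shows "inner (case_sum u (vtilde u v) a) (case_sum u (vtilde u v) b) = (if a = b then 1 else 0)"
  using assms(4,5) principal_vectors_orthonormal[OF assms(1)]
    principal_vectors_vtilde_orthonormal[OF assms(1-3)]
  by (auto elim!: PlusE simp: inner_commute split: if_splits)

lemma principal_vectors_span:
  assumes pv: "principal_vectors VA VB k u v" and "subspace VA" "subspace VB"
    and "dim VA = k" "dim VB = k"
  shows "VA = span (u ` {..<k})" "VB = span (v ` {..<k})"
  using assms principal_vectors_orthonormal[OF pv]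
  by (intro subspace_eq_span_orthonormal; auto simp: principal_vectorsD)+

lemma principal_vector_in_span_vtilde:
  assumes pv: "principal_vectors VA VB k u v" and "subspace VB" "i < k"
  shows "v i \<in> span (u ` {..<k} \<union> vtilde u v ` positive_angle_indices k u v)"
proof -
  define c where "c = inner (u i) (v i)"
  note bounds = principal_vectors_inner_bounds[OF pv \<open>i < k\<close>]
  show ?thesis
  proof (cases "c < 1")
    case True
    then have i: "i \<in> positive_angle_indices k u v"
      using positive_angle_indices_iff[OF pv] \<open>i < k\<close> c_def by simp
    have "0 < 1 - c\<^sup>2"
      using principal_vectors_inner_nonneg[OF pv \<open>subspace VB\<close> \<open>i < k\<close>] True c_def
      by (simp add: power_less_one_iff)
    then have "v i = sqrt (1 - c\<^sup>2) *\<^sub>R vtilde u v i + c *\<^sub>R u i"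
      using bounds unfolding c_def by (simp add: vtilde_eq)
    then show ?thesis using \<open>i < k\<close> i by (simp add: span_add span_scale span_base)
  next
    case False
    then have "inner (v i - u i) (v i - u i) = 0"
      using bounds principal_vectors_orthonormal[OF pv \<open>i < k\<close> \<open>i < k\<close>] unfolding c_def
      by (simp add: inner_diff_left inner_diff_right inner_commute)
    then show ?thesis using \<open>i < k\<close> by (simp add: span_base)
  qed
qed

lemma subspace_sum_eq_span_principal_vectors:
  assumes pv: "principal_vectors VA VB k u v" and "subspace VA" "subspace VB"
    and "dim VA = k" "dim VB = k"
  shows "subspace_sum VA VB = span (u ` {..<k} \<union> vtilde u v ` positive_angle_indices k u v)"
    (is "_ = span ?B")
proof -
  have "subspace_sum VA VB = span (u ` {..<k} \<union> v ` {..<k})"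
    unfolding span_Un subspace_sum_def principal_vectors_span[OF assms, symmetric] ..
  moreover have "u ` {..<k} \<union> v ` {..<k} \<subseteq> span ?B"
    using principal_vector_in_span_vtilde[OF pv \<open>subspace VB\<close>] by (auto intro: span_base)
  moreover have "vtilde u v i \<in> span (u ` {..<k} \<union> v ` {..<k})" if "i < k" for i
    using principal_vectors_inner_bounds[OF pv that] that
    by (simp add: vtilde_eq span_scale span_diff span_base)
  then have "?B \<subseteq> span (u ` {..<k} \<union> v ` {..<k})"
    by (auto simp: positive_angle_indices_iff[OF pv] intro: span_base)
  ultimately show ?thesis by (simp add: span_eq)
qed

lemma norm_orth_proj_subspace_sum_squared:
  assumes "principal_vectors VA VB k u v" "subspace VA" "subspace VB" "dim VA = k" "dim VB = k"
  shows "(norm (orth_proj (subspace_sum VA VB) w))\<^sup>2 =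
         (norm (orth_proj VA w))\<^sup>2 + (private_info k u v w)\<^sup>2"
proof -
  define P where "P = positive_angle_indices k u v"
  have "finite P" unfolding P_def positive_angle_indices_def by simp
  have "subspace_sum VA VB = span (case_sum u (vtilde u v) ` ({..<k} <+> P))"
    unfolding subspace_sum_eq_span_principal_vectors[OF assms] P_def Plus_def image_Un image_image
    by simp
  then have "(norm (orth_proj (subspace_sum VA VB) w))\<^sup>2 =
             (\<Sum>a\<in>{..<k} <+> P. (inner w (case_sum u (vtilde u v) a))\<^sup>2)"
    using principal_vectors_extended_orthonormal[OF assms(1-3)] \<open>finite P\<close> unfolding P_def
    by (simp add: norm_orth_proj_span_orthonormal)
  also have "\<dots> = (\<Sum>i<k. (inner w (u i))\<^sup>2) + (\<Sum>i\<in>P. (inner w (vtilde u v i))\<^sup>2)"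
    using \<open>finite P\<close> by (simp add: sum.Plus)
  also have "(\<Sum>i<k. (inner w (u i))\<^sup>2) = (norm (orth_proj VA w))\<^sup>2"
    unfolding principal_vectors_span(1)[OF assms] using principal_vectors_orthonormal(1)[OF assms(1)]
    by (intro norm_orth_proj_span_orthonormal[symmetric]) auto
  also have "(\<Sum>i\<in>P. (inner w (vtilde u v i))\<^sup>2) = (private_info k u v w)\<^sup>2"
    unfolding private_info_squared P_def ..
  finally show ?thesis .
qed

lemma sqrt_sum_squares_minus_eq:
  fixes a b :: real
  assumes "0 \<le> a"
  shows "sqrt (a\<^sup>2 + b\<^sup>2) - a = b\<^sup>2 / (sqrt (a\<^sup>2 + b\<^sup>2) + a)"
proof (cases "b = 0")
  case False
  then have "0 < sqrt (a\<^sup>2 + b\<^sup>2) + a" using assms by (simp add: add_nonneg_pos add_pos_nonneg)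
  moreover have "(sqrt (a\<^sup>2 + b\<^sup>2) - a) * (sqrt (a\<^sup>2 + b\<^sup>2) + a) = b\<^sup>2"
    by (simp add: algebra_simps power2_eq_square[symmetric])
  ultimately show ?thesis by (simp add: eq_divide_eq)
qed (use assms in simp)

lemma sqrt_sum_squares_minus_ge:
  fixes a b :: real
  assumes "0 \<le> a" "0 \<le> b"
  shows "b\<^sup>2 / (2 * a + b) \<le> sqrt (a\<^sup>2 + b\<^sup>2) - a"
proof (cases "b = 0")
  case False
  have "sqrt (a\<^sup>2 + b\<^sup>2) + a \<le> 2 * a + b" using sqrt_sum_squares_le_sum[OF assms] by simp
  moreover have "0 < sqrt (a\<^sup>2 + b\<^sup>2) + a" using assms False by (simp add: add_nonneg_pos add_pos_nonneg)
  ultimately show ?thesis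
    unfolding sqrt_sum_squares_minus_eq[OF assms(1)] by (intro divide_left_mono) auto
qed (use assms in simp)

lemma square_div_perturbed_smallo:
  fixes a :: real and h :: "real \<Rightarrow> real"
  assumes "0 < a" "(h \<longlongrightarrow> 0) (at 0)"
  shows "(\<lambda>e. e\<^sup>2 / (2 * a + h e) - e\<^sup>2 / (2 * a)) \<in> o[at 0](\<lambda>e. e\<^sup>2)"
proof (rule smalloI_tendsto)
  have "((\<lambda>e. 1 / (2 * a + h e) - 1 / (2 * a)) \<longlongrightarrow> 1 / (2 * a + 0) - 1 / (2 * a)) (at 0)"
    using assms by (intro tendsto_intros) auto
  then have "((\<lambda>e. 1 / (2 * a + h e) - 1 / (2 * a)) \<longlongrightarrow> 0) (at 0)" by simp
  then show "((\<lambda>e. (e\<^sup>2 / (2 * a + h e) - e\<^sup>2 / (2 * a)) / e\<^sup>2) \<longlongrightarrow> 0) (at 0)"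
    by (rule Lim_transform_eventually) (auto simp: eventually_at_filter diff_divide_distrib)
  show "\<forall>\<^sub>F e in at (0::real). e\<^sup>2 \<noteq> 0" by (simp add: eventually_neq_at_within)
qed

lemma sqrt_sum_squares_minus_smallo:
  fixes a :: real
  assumes "0 < a"
  shows "(\<lambda>e. (sqrt (a\<^sup>2 + e\<^sup>2) - a) - e\<^sup>2 / (2 * a)) \<in> o[at 0](\<lambda>e. e\<^sup>2)"
proof -
  have "((\<lambda>e. sqrt (a\<^sup>2 + e\<^sup>2) - a) \<longlongrightarrow> sqrt (a\<^sup>2 + 0\<^sup>2) - a) (at 0)"
    by (intro tendsto_intros)
  then have "(\<lambda>e. e\<^sup>2 / (2 * a + (sqrt (a\<^sup>2 + e\<^sup>2) - a)) - e\<^sup>2 / (2 * a)) \<in> o[at 0](\<lambda>e. e\<^sup>2)"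
    using assms by (intro square_div_perturbed_smallo) auto
  then show ?thesis
    using sqrt_sum_squares_minus_eq[of a] assms by (simp add: add.commute)
qed

theorem theorem2p6:
  fixes VA VB :: "(real ^ 'd) set" and w :: "real ^ 'd" and k :: nat
    and u v :: "nat \<Rightarrow> real ^ 'd"
  assumes "subspace VA" and "subspace VB"
    and "dim VA = k" and "dim VB = k"
    and "norm w = 1"
    and "principal_vectors VA VB k u v"
    and "norm (orth_proj VA w) \<ge> norm (orth_proj VB w)"
  shows
    "let KA = norm (orth_proj VA w); KB = norm (orth_proj VB w);
         KAB = norm (orth_proj (subspace_sum VA VB) w);
         \<Delta> = KAB - max KA KB;
         \<eta> = private_info k u v w
     in \<Delta> = sqrt (KA\<^sup>2 + \<eta>\<^sup>2) - KA
        \<and> \<eta>\<^sup>2 / (2 * KA + \<eta>) \<le> \<Delta> \<and> \<Delta> \<le> \<eta>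
        \<and> (KA = 0 \<longrightarrow> \<Delta> = \<eta>)
        \<and> (KA > 0 \<longrightarrow>
             (\<lambda>e::real. (sqrt (KA\<^sup>2 + e\<^sup>2) - KA) - e\<^sup>2 / (2 * KA)) \<in> o[at 0](\<lambda>e. e\<^sup>2)
           \<and> (\<lambda>e::real. e\<^sup>2 / (2 * KA + e) - e\<^sup>2 / (2 * KA)) \<in> o[at 0](\<lambda>e. e\<^sup>2))"
proof -
  define KA where "KA = norm (orth_proj VA w)"
  define KAB where "KAB = norm (orth_proj (subspace_sum VA VB) w)"
  define \<eta> where "\<eta> = private_info k u v w"
  have "0 \<le> \<eta>" unfolding \<eta>_def private_info_def by (simp add: sum_nonneg)
  have "KAB\<^sup>2 = KA\<^sup>2 + \<eta>\<^sup>2"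
    unfolding KA_def KAB_def \<eta>_def using assms(6,1-4) by (rule norm_orth_proj_subspace_sum_squared)
  then have KAB: "KAB = sqrt (KA\<^sup>2 + \<eta>\<^sup>2)" unfolding KAB_def by (simp add: real_sqrt_unique)
  have max: "max KA (norm (orth_proj VB w)) = KA" using assms(7) unfolding KA_def by simp
  have "KA > 0 \<longrightarrow> (\<lambda>e. e\<^sup>2 / (2 * KA + e) - e\<^sup>2 / (2 * KA)) \<in> o[at 0](\<lambda>e. e\<^sup>2)"
    using square_div_perturbed_smallo[of KA "\<lambda>e. e"] by simp
  then show ?thesis
    unfolding Let_def KA_def[symmetric] KAB_def[symmetric] \<eta>_def[symmetric] max KAB
    using sqrt_sum_squares_minus_ge[of KA \<eta>] sqrt_sum_squares_le_sum[of KA \<eta>]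
      sqrt_sum_squares_minus_smallo[of KA] \<open>0 \<le> \<eta>\<close>
    by (auto simp: KA_def)
qed

end
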